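(* If $P$ is the Petersen graph, then $\operatorname{H}(P)=6$.
   Context: All graphs are finite, simple and undirected. In hopping forcing each vertex is colored blue or white, and initially a set $B\subseteq V(G)$ is blue. The hopping color change rule: a blue vertex $v$ may force a white vertex $w$ to become blue if $v$ has not previously performed a force and every neighbor of $v$ is blue. A chronological list of forces of $B$ is a sequence of such forces applied one at a time starting from $B$ until no further force is possible. $B$ is a hopping forcing set if some chronological list of forces of $B$ turns every vertex blue. $\operatorname{H}(G)$ is the minimum size of a hopping forcing set of $G$. *)

theory Defs
  imports Main
begin

text \<open>A finite simple graph is given by a finite vertex set V and a symmetric,
irreflexive adjacency relation E (only its restriction to V matters).\<close>

text \<open>A state is a pair (S, U): S is the set of blue vertices,
U the set of vertices that have already performed a force. hop_reach V E B st
holds iff st is reachable from (B, {}) by a finite sequence of hopping forces.\<close>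

inductive hop_reach :: "'a set \<Rightarrow> ('a \<Rightarrow> 'a \<Rightarrow> bool) \<Rightarrow> 'a set \<Rightarrow> 'a set \<times> 'a set \<Rightarrow> bool"
  for V :: "'a set" and E :: "'a \<Rightarrow> 'a \<Rightarrow> bool" and B :: "'a set" where
  init: "hop_reach V E B (B, {})"
| step: "\<lbrakk> hop_reach V E B (S, U); v \<in> S; v \<notin> U;
           \<forall>u\<in>V. E v u \<longrightarrow> u \<in> S; w \<in> V; w \<notin> S \<rbrakk>
         \<Longrightarrow> hop_reach V E B (insert w S, insert v U)"

text \<open>B is a hopping forcing set if some chronological list of forces turns every
vertex blue (once all vertices are blue no further force is possible, so such a
finite sequence of forces is a complete chronological list).\<close>

definition hopping_forcing_set :: "'a set \<Rightarrow> ('a \<Rightarrow> 'a \<Rightarrow> bool) \<Rightarrow> 'a set \<Rightarrow> bool" where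
  "hopping_forcing_set V E B \<longleftrightarrow> B \<subseteq> V \<and> (\<exists>U. hop_reach V E B (V, U))"

definition hopping_number :: "'a set \<Rightarrow> ('a \<Rightarrow> 'a \<Rightarrow> bool) \<Rightarrow> nat" where
  "hopping_number V E = (LEAST k. \<exists>B. hopping_forcing_set V E B \<and> card B = k)"

text \<open>The Petersen graph as the Kneser graph K(5,2): vertices are the 2-element
subsets of {0,...,4}, two vertices adjacent iff they are disjoint.\<close>

definition petersen_V :: "nat set set" where
  "petersen_V = {A. A \<subseteq> {0..<5} \<and> card A = 2}"

definition petersen_E :: "nat set \<Rightarrow> nat set \<Rightarrow> bool" where
  "petersen_E A C \<longleftrightarrow> A \<in> petersen_V \<and> C \<in> petersen_V \<and> A \<inter> C = {}"

end

theory Submission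
  imports Defs
begin

text \<open>A vertex may force only when its whole closed neighbourhood is blue, and every vertex
  forces at most once. Hence, when the k-th force is made, the closed neighbourhoods of the
  first k forcing vertices are blue, yet only |B| + k - 1 vertices are. In the Petersen graph any
  three closed neighbourhoods cover at least 8 vertices, so a set of at most five vertices
  performs at most two forces and colours at most 7 of the 10 vertices. An explicit set of six
  vertices turns everything blue with four forces.\<close>

definition closed_nbhd :: "'a set \<Rightarrow> ('a \<Rightarrow> 'a \<Rightarrow> bool) \<Rightarrow> 'a \<Rightarrow> 'a set" where
  "closed_nbhd V E v = insert v {u \<in> V. E v u}"

lemma hop_reach_subset:
  assumes "hop_reach V E B (S, U)" "B \<subseteq> V"
  shows "U \<subseteq> S \<and> S \<subseteq> V"
  using assms by (induction "(S, U)" arbitrary: S U rule: hop_reach.induct) auto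

lemma hop_reach_finite:
  assumes "hop_reach V E B (S, U)" "finite V" "B \<subseteq> V"
  shows "finite S" "finite U"
  using hop_reach_subset[OF assms(1,3)] assms(2) by (meson finite_subset)+

lemma hop_reach_card:
  assumes "hop_reach V E B (S, U)" "finite V" "B \<subseteq> V"
  shows "card S = card B + card U"
  using assms
proof (induction "(S, U)" arbitrary: S U rule: hop_reach.induct)
  case init
  then show ?case by simp
next
  case (step S U v w)
  then show ?case
    using hop_reach_finite[OF step.hyps(1) step.prems] by simp
qed

lemma hop_reach_closed_nbhd_subset:
  assumes "hop_reach V E B (S, U)" "v \<in> U"
  shows "closed_nbhd V E v \<subseteq> S"
  using assms
proof (induction "(S, U)" arbitrary: S U rule: hop_reach.induct)
  case init
  then show ?case by simp
next
  case (step S U v' w)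
  then show ?case by (cases "v = v'") (auto simp: closed_nbhd_def)
qed

lemma hop_reach_card_Union_closed_nbhd_less:
  assumes "hop_reach V E B (S, U)" "finite V" "B \<subseteq> V" "U \<noteq> {}"
  shows "card (\<Union> (closed_nbhd V E ` U)) < card B + card U"
  using assms(1)
proof cases
  case init
  with assms(4) show ?thesis by simp
next
  case (step S' U' v w)
  \<comment> \<open>All these neighbourhoods were blue before the last force, whose target w was white.\<close>
  have "\<Union> (closed_nbhd V E ` U) \<subseteq> S'"
    using step hop_reach_closed_nbhd_subset[OF step(3)] by (auto simp: closed_nbhd_def)
  also have "S' \<subset> S"
    using step by auto
  finally have "card (\<Union> (closed_nbhd V E ` U)) < card S"
    using hop_reach_finite(1)[OF assms(1-3)] by (simp add: psubset_card_mono)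
  then show ?thesis
    using hop_reach_card[OF assms(1-3)] by simp
qed

lemma hop_reach_prefix:
  assumes "hop_reach V E B (S, U)" "k \<le> card U"
  shows "\<exists>S' U'. hop_reach V E B (S', U') \<and> card U' = k"
  using assms
proof (induction "(S, U)" arbitrary: S U rule: hop_reach.induct)
  case init
  then show ?case using hop_reach.init by fastforce
next
  case (step S U v w)
  show ?case
  proof (cases "k \<le> card U")
    case True
    with step.hyps(2) show ?thesis by blast
  next
    case False
    then have "card (insert v U) = k"
      using step.prems step.hyps(4) by (cases "finite U") auto
    with hop_reach.step[OF step.hyps(1) step.hyps(3-7)] show ?thesis by blast
  qed
qed

lemma hopping_forcing_set_card_lower:
  assumes "hopping_forcing_set V E B" "finite V" "0 < k"
    and spread: "\<And>W. W \<subseteq> V \<Longrightarrow> card W = k \<Longrightarrow> c \<le> card (\<Union> (closed_nbhd V E ` W))"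
  shows "min (card V) c < card B + k"
proof -
  obtain U where reach: "hop_reach V E B (V, U)" and "B \<subseteq> V"
    using assms(1) unfolding hopping_forcing_set_def by blast
  show ?thesis
  proof (cases "k \<le> card U")
    case True
    then obtain S' U' where reach': "hop_reach V E B (S', U')" and "card U' = k"
      using hop_reach_prefix[OF reach] by blast
    then have "U' \<subseteq> V" "U' \<noteq> {}"
      using hop_reach_subset[OF reach' \<open>B \<subseteq> V\<close>] \<open>0 < k\<close> by auto
    then have "c \<le> card (\<Union> (closed_nbhd V E ` U'))"
      using spread \<open>card U' = k\<close> by blast
    also have "\<dots> < card B + k"
      using hop_reach_card_Union_closed_nbhd_less[OF reach' assms(2) \<open>B \<subseteq> V\<close> \<open>U' \<noteq> {}\<close>]
        \<open>card U' = k\<close> by simp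
    finally show ?thesis by simp
  next
    case False
    then show ?thesis
      using hop_reach_card[OF reach assms(2) \<open>B \<subseteq> V\<close>] by simp
  qed
qed

lemma card_3_ordered:
  fixes I :: "'a::linorder set"
  assumes "card I = 3"
  obtains i j k where "I = {i, j, k}" "i < j" "j < k"
proof -
  obtain x y z where "I = {x, y, z}" "x \<noteq> y" "y \<noteq> z" "x \<noteq> z"
    using assms unfolding card_3_iff by blast
  then show ?thesis using that
    by (cases x y rule: linorder_cases; cases y z rule: linorder_cases; cases x z rule: linorder_cases)
       (auto simp: insert_commute)
qed

lemma hopping_number_eqI:
  assumes "hopping_forcing_set V E B" "card B = n"
    and "\<And>B'. hopping_forcing_set V E B' \<Longrightarrow> n \<le> card B'"
  shows "hopping_number V E = n"
  unfolding hopping_number_def using assms by (intro Least_equality) auto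

definition petersen_vertices :: "nat set list" where
  "petersen_vertices = [{0,1}, {0,2}, {0,3}, {0,4}, {1,2}, {1,3}, {1,4}, {2,3}, {2,4}, {3,4}]"

lemma petersen_V_eq: "petersen_V = set petersen_vertices"
proof
  show "petersen_V \<subseteq> set petersen_vertices"
  proof
    fix A assume "A \<in> petersen_V"
    then obtain x y where "A = {x, y}" "x \<noteq> y" "x \<in> {0..<5}" "y \<in> {0..<5}"
      by (auto simp: petersen_V_def card_2_iff)
    moreover have "{0..<5} = {0, 1, 2, 3, 4 :: nat}"
      by code_simp
    ultimately show "A \<in> set petersen_vertices"
      by (auto simp: petersen_vertices_def doubleton_eq_iff)
  qed
  show "set petersen_vertices \<subseteq> petersen_V"
    by (auto simp: petersen_vertices_def petersen_V_def)
qed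

lemma distinct_petersen_vertices: "distinct petersen_vertices"
  by code_simp

lemma length_petersen_vertices: "length petersen_vertices = 10"
  by (simp add: petersen_vertices_def)

lemma card_petersen_V: "card petersen_V = 10"
  using distinct_card[OF distinct_petersen_vertices]
  by (simp add: petersen_V_eq length_petersen_vertices)

lemma inj_on_nth_petersen_vertices: "inj_on ((!) petersen_vertices) {0..<10}"
  using inj_on_nth[OF distinct_petersen_vertices] length_petersen_vertices by simp

text \<open>Entry i lists the indices of the closed neighbourhood of the i-th vertex; working with
  indices keeps the cardinality computations on natural numbers rather than on sets of sets.\<close>

definition petersen_nbhd_index :: "nat list list" where
  "petersen_nbhd_index = [[0, 7, 8, 9], [1, 5, 6, 9], [2, 4, 6, 8], [3, 4, 5, 7], [4, 2, 3, 9],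
    [5, 1, 3, 8], [6, 1, 2, 7], [7, 0, 3, 6], [8, 0, 2, 5], [9, 0, 1, 4]]"

lemma petersen_nbhd_index_eq:
  "\<forall>i\<in>{0..<10}. petersen_nbhd_index ! i =
     i # filter (\<lambda>j. petersen_vertices ! i \<inter> petersen_vertices ! j = {}) [0..<10]"
  by code_simp

lemma petersen_closed_nbhd_nth:
  assumes "i < 10"
  shows "closed_nbhd petersen_V petersen_E (petersen_vertices ! i)
    = (!) petersen_vertices ` set (petersen_nbhd_index ! i)"
proof -
  let ?vs = petersen_vertices
  have "{u \<in> petersen_V. petersen_E (?vs ! i) u} = {u \<in> set ?vs. ?vs ! i \<inter> u = {}}"
    using assms by (auto simp: petersen_E_def petersen_V_eq length_petersen_vertices)
  also have "\<dots> = (!) ?vs ` {j. j < 10 \<and> ?vs ! i \<inter> ?vs ! j = {}}"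
    by (auto simp: in_set_conv_nth length_petersen_vertices)
  finally have "closed_nbhd petersen_V petersen_E (?vs ! i)
      = (!) ?vs ` insert i {j. j < 10 \<and> ?vs ! i \<inter> ?vs ! j = {}}"
    by (simp add: closed_nbhd_def)
  also have "insert i {j. j < 10 \<and> ?vs ! i \<inter> ?vs ! j = {}} = set (petersen_nbhd_index ! i)"
    using petersen_nbhd_index_eq assms by auto
  finally show ?thesis .
qed

lemma petersen_nbhd_index_less: "i < 10 \<Longrightarrow> set (petersen_nbhd_index ! i) \<subseteq> {0..<10}"
  using petersen_nbhd_index_eq by auto

lemma petersen_nbhd_index_spread:
  "\<forall>k\<in>{0..<10}. \<forall>j\<in>{0..<k}. \<forall>i\<in>{0..<j}.
     8 \<le> card (set (petersen_nbhd_index ! i @ petersen_nbhd_index ! j @ petersen_nbhd_index ! k))"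
  by code_simp

lemma petersen_closed_nbhd_spread:
  assumes "W \<subseteq> petersen_V" "card W = 3"
  shows "8 \<le> card (\<Union> (closed_nbhd petersen_V petersen_E ` W))"
proof -
  let ?vs = petersen_vertices and ?idx = petersen_nbhd_index
  define I where "I = {i \<in> {0..<10}. ?vs ! i \<in> W}"
  have W: "W = (!) ?vs ` I"
  proof
    show "W \<subseteq> (!) ?vs ` I"
    proof
      fix x assume "x \<in> W"
      then have "x \<in> set ?vs"
        using assms(1) petersen_V_eq by auto
      then obtain i where "i < 10" "x = ?vs ! i"
        by (auto simp: in_set_conv_nth length_petersen_vertices)
      with \<open>x \<in> W\<close> show "x \<in> (!) ?vs ` I"
        by (auto simp: I_def)
    qed
  qed (auto simp: I_def)
  have inj: "inj_on ((!) ?vs) J" if "J \<subseteq> {0..<10}" for J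
    using inj_on_nth_petersen_vertices that by (rule inj_on_subset)
  have "I \<subseteq> {0..<10}"
    by (auto simp: I_def)
  then have "card I = 3"
    using assms(2) card_image[OF inj] W by simp
  then obtain i j k where ijk: "I = {i, j, k}" "i < j" "j < k"
    by (rule card_3_ordered)
  then have "k < 10"
    by (auto simp: I_def)
  have "\<Union> (closed_nbhd petersen_V petersen_E ` W) = (!) ?vs ` set (?idx ! i @ ?idx ! j @ ?idx ! k)"
    using W ijk \<open>k < 10\<close> by (simp add: petersen_closed_nbhd_nth image_Un)
  moreover have "set (?idx ! i @ ?idx ! j @ ?idx ! k) \<subseteq> {0..<10}"
    using petersen_nbhd_index_less ijk \<open>k < 10\<close> by simp
  ultimately have "card (\<Union> (closed_nbhd petersen_V petersen_E ` W))
      = card (set (?idx ! i @ ?idx ! j @ ?idx ! k))"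
    using card_image[OF inj] by simp
  then show ?thesis
    using petersen_nbhd_index_spread ijk \<open>k < 10\<close> by simp
qed

lemma petersen_hopping_forcing_set_card_ge:
  assumes "hopping_forcing_set petersen_V petersen_E B"
  shows "6 \<le> card B"
proof -
  have "min (card petersen_V) 8 < card B + 3"
    by (rule hopping_forcing_set_card_lower[OF assms _ _ petersen_closed_nbhd_spread])
      (simp_all add: petersen_V_eq)
  then show ?thesis
    by (simp add: card_petersen_V)
qed

lemma petersen_hopping_forcing_set:
  "hopping_forcing_set petersen_V petersen_E {{0,1}, {0,2}, {0,3}, {0,4}, {1,2}, {3,4}}"
  (is "hopping_forcing_set ?V ?E ?B")
proof -
  note petersen_simps = petersen_E_def petersen_V_eq petersen_vertices_def doubleton_eq_iff
  have "hop_reach ?V ?E ?B (?B, {})"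
    by (rule hop_reach.init)
  then have "hop_reach ?V ?E ?B (insert {1,3} ?B, {{3,4}})"
    by (rule hop_reach.step) (simp_all add: petersen_simps)
  then have "hop_reach ?V ?E ?B (insert {1,4} (insert {1,3} ?B), {{1,2}, {3,4}})"
    by (rule hop_reach.step) (simp_all add: petersen_simps)
  then have "hop_reach ?V ?E ?B (insert {2,3} (insert {1,4} (insert {1,3} ?B)), {{0,2}, {1,2}, {3,4}})"
    by (rule hop_reach.step) (simp_all add: petersen_simps)
  then have "hop_reach ?V ?E ?B (insert {2,4} (insert {2,3} (insert {1,4} (insert {1,3} ?B))),
      {{1,4}, {0,2}, {1,2}, {3,4}})"
    by (rule hop_reach.step) (simp_all add: petersen_simps)
  moreover have "insert {2,4} (insert {2,3} (insert {1,4} (insert {1,3} ?B))) = ?V"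
    unfolding petersen_V_eq petersen_vertices_def by code_simp
  moreover have "?B \<subseteq> ?V"
    unfolding petersen_V_eq petersen_vertices_def by code_simp
  ultimately show ?thesis
    unfolding hopping_forcing_set_def by auto
qed

theorem mainTheorem4:
  shows "hopping_number petersen_V petersen_E = 6"
proof (rule hopping_number_eqI)
  show "hopping_forcing_set petersen_V petersen_E {{0,1}, {0,2}, {0,3}, {0,4}, {1,2}, {3,4}}"
    by (rule petersen_hopping_forcing_set)
  show "card {{0,1}, {0,2}, {0,3}, {0,4}, {1,2}, {3,4 :: nat}} = 6"
    by code_simp
qed (rule petersen_hopping_forcing_set_card_ge)

end
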